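(* Let $G$ be a connected graph on $n\geq 6$ vertices with edge-connectivity $k\geq 2$. Then $$ABC(G)\leq k\sqrt{\frac{n+k-3}{k(n-1)}}+\frac{k(k-1)}{2(n-1)}\sqrt{2n-4}+\frac{(n-k-1)(n-k-2)}{2(n-2)}\sqrt{2n-6}+k(n-k-1)\sqrt{\frac{2n-5}{(n-1)(n-2)}},$$ with equality if and only if $G\cong K_k\vee (K_1+K_{n-k-1})$.
   Context: For a simple graph $G$, $ABC(G)=\sum_{uv\in E(G)}\sqrt{\frac{d(u)+d(v)-2}{d(u)d(v)}}$, where $d(u)$ is the degree of $u$. The edge-connectivity of $G$ is the minimum number of edges whose removal disconnects $G$. $K_r$ is the complete graph on $r$ vertices, $H_1+H_2$ denotes the disjoint union, and $G\vee H$ (join) is the graph on $V(G)\cup V(H)$ with edge set $E(G)\cup E(H)\cup\{xy: x\in V(G), y\in V(H)\}$. Thus $K_k\vee(K_1+K_{n-k-1})$ is the graph obtained from $K_{n-1}$ by adding a new vertex adjacent to exactly $k$ of its vertices. *)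

theory Defs
  imports Complex_Main
begin

definition simple_graph :: "'a set \<Rightarrow> 'a set set \<Rightarrow> bool" where
  "simple_graph V E \<longleftrightarrow> finite V \<and> (\<forall>e\<in>E. \<exists>u v. e = {u, v} \<and> u \<in> V \<and> v \<in> V \<and> u \<noteq> v)"

definition degree :: "'a set \<Rightarrow> 'a set set \<Rightarrow> 'a \<Rightarrow> nat" where
  "degree V E u = card {v \<in> V. {u, v} \<in> E}"

definition connected_graph :: "'a set \<Rightarrow> 'a set set \<Rightarrow> bool" where
  "connected_graph V E \<longleftrightarrow> V \<noteq> {} \<and>
     (\<forall>u\<in>V. \<forall>v\<in>V. (\<lambda>x y. {x, y} \<in> E)\<^sup>*\<^sup>* u v)"

definition edge_connectivity :: "'a set \<Rightarrow> 'a set set \<Rightarrow> nat" where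
  "edge_connectivity V E = (LEAST m. \<exists>F \<subseteq> E. card F = m \<and> \<not> connected_graph V (E - F))"

definition ABC :: "'a set \<Rightarrow> 'a set set \<Rightarrow> real" where
  "ABC V E = (\<Sum>e\<in>E. sqrt ((real (\<Sum>u\<in>e. degree V E u) - 2) / real (\<Prod>u\<in>e. degree V E u)))"

text \<open>The graph K_k \<or> (K_1 + K_{n-k-1}) on vertex set {0..<n}: vertices 0..k-1 form K_k,
  vertex k is the K_1, vertices k+1..n-1 form K_{n-k-1}.\<close>
definition join_graph_edges :: "nat \<Rightarrow> nat \<Rightarrow> nat set set" where
  "join_graph_edges n k = {{i, j} | i j. i < n \<and> j < n \<and> i \<noteq> j \<and>
       \<not> (i = k \<and> k < j) \<and> \<not> (j = k \<and> k < i)}"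

definition graph_iso :: "'a set \<Rightarrow> 'a set set \<Rightarrow> 'b set \<Rightarrow> 'b set set \<Rightarrow> bool" where
  "graph_iso V E W F \<longleftrightarrow> (\<exists>f. bij_betw f V W \<and>
      (\<forall>u\<in>V. \<forall>v\<in>V. {u, v} \<in> E \<longleftrightarrow> {f u, f v} \<in> F))"

end

theory Submission
  imports Defs "HOL-Analysis.Convex"
begin

text \<open>Every vertex has degree at least the edge-connectivity \<open>k\<close>. If some vertex \<open>v\<close> has degree
  exactly \<open>k\<close>, then \<open>G\<close> is a spanning subgraph of the graph obtained from \<open>K\<^sub>n\<close> by deleting the
  edges from \<open>v\<close> to its non-neighbours, which is \<open>K\<^sub>k \<or> (K\<^sub>1 + K\<^sub>n\<^sub>-\<^sub>k\<^sub>-\<^sub>1)\<close>; since adding an edge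
  to a graph of minimum degree at least 2 strictly increases the ABC index, the bound and its
  equality case follow. Otherwise every degree is at least \<open>k + 1\<close>, so both sides of a minimum
  edge cut have at least \<open>k + 2\<close> vertices. This bounds the number \<open>m\<close> of edges by
  \<open>n(n - 1)/2 - (k + 2)(n - k - 2) + k\<close>, and the Cauchy--Schwarz estimate
  \<open>ABC\<^sup>2 \<le> m (n - 2m / (n - 1)\<^sup>2)\<close> then stays strictly below the bound.\<close>

section \<open>The weight of an edge\<close>

definition abc_weight :: "real \<Rightarrow> real \<Rightarrow> real" where
  "abc_weight x y = sqrt ((x + y - 2) / (x * y))"

lemma abc_weight_commute: "abc_weight x y = abc_weight y x"
  unfolding abc_weight_def by (simp add: algebra_simps)

lemma abc_weight_nonneg: "x \<ge> 1 \<Longrightarrow> y \<ge> 1 \<Longrightarrow> abc_weight x y \<ge> 0"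
  unfolding abc_weight_def by simp

lemma abc_weight_sq: "x \<ge> 1 \<Longrightarrow> y \<ge> 1 \<Longrightarrow> (abc_weight x y)\<^sup>2 = (x + y - 2) / (x * y)"
  unfolding abc_weight_def by simp

lemma inv_sqrt_le_abc_weight:
  assumes "x \<ge> 2" "y > 0"
  shows "1 / sqrt x \<le> abc_weight x y"
proof -
  have "1 / x \<le> (x + y - 2) / (x * y)" using assms by (simp add: field_simps)
  then have "sqrt (1 / x) \<le> abc_weight x y" unfolding abc_weight_def by simp
  then show ?thesis by (simp add: real_sqrt_divide)
qed

lemma inv_sqrt_less_abc_weight:
  assumes "x > 2" "y > 0"
  shows "1 / sqrt x < abc_weight x y"
proof -
  have "1 / x < (x + y - 2) / (x * y)" using assms by (simp add: field_simps)
  then have "sqrt (1 / x) < abc_weight x y" unfolding abc_weight_def by simp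
  then show ?thesis by (simp add: real_sqrt_divide)
qed

lemma abc_weight_diff_le:
  assumes x: "x \<ge> 1" and y: "y \<ge> 2"
  shows "abc_weight x y - abc_weight (x + 1) y \<le> 1 / (2 * x * sqrt (x + 1))"
proof -
  define A B s where "A = abc_weight x y" and "B = abc_weight (x + 1) y" and "s = sqrt (x + 1)"
  have s: "s > 0" "s * s = x + 1" using x by (simp_all add: s_def)
  have "A\<^sup>2 - B\<^sup>2 = (x + y - 2) / (x * y) - (x + y - 1) / ((x + 1) * y)"
    using x y by (simp add: A_def B_def abc_weight_sq algebra_simps)
  also have "\<dots> = (y - 2) / (x * (x + 1) * y)"
    using x y by (simp add: divide_simps) (simp add: algebra_simps)
  finally have "A\<^sup>2 - B\<^sup>2 = ((y - 2) / y) / (x * (x + 1))" by (simp add: mult.commute)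
  moreover have "0 \<le> ((y - 2) / y) / (x * (x + 1))" using x y by simp
  moreover have "((y - 2) / y) / (x * (x + 1)) \<le> 1 / (x * (x + 1))"
    using x y by (intro divide_right_mono) auto
  ultimately have AB: "B\<^sup>2 \<le> A\<^sup>2" and diff: "A\<^sup>2 - B\<^sup>2 \<le> 1 / (x * (x + 1))"
    by linarith+
  have B: "1 / s \<le> B" unfolding B_def s_def using x y by (intro inv_sqrt_le_abc_weight) auto
  have "B \<le> A" using AB x y by (simp add: A_def B_def abc_weight_nonneg power2_le_iff_abs_le)
  with B have sum: "2 / s \<le> A + B" by simp
  moreover have "2 / s > 0" using s by simp
  ultimately have pos: "A + B > 0" by linarith
  have "(A - B) * (A + B) \<le> 1 / (x * (x + 1))" using diff by (simp add: power2_eq_square algebra_simps)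
  then have "A - B \<le> 1 / (x * (x + 1)) / (A + B)" using pos by (simp only: pos_le_divide_eq)
  also have "\<dots> \<le> 1 / (x * (x + 1)) / (2 / s)"
    using sum pos s x by (intro divide_left_mono) auto
  also have "\<dots> = s / (2 * x * (s * s))" using x by (simp add: s(2) field_simps)
  also have "\<dots> = 1 / (2 * x * s)" using s(1) by simp
  finally show ?thesis by (simp add: A_def B_def s_def)
qed

lemma abc_weight_gain:
  assumes "x > 1" "y > 1"
  shows "1 / (2 * sqrt (x + 1)) + 1 / (2 * sqrt (y + 1)) < abc_weight (x + 1) (y + 1)"
proof -
  have "1 / sqrt (x + 1) < abc_weight (x + 1) (y + 1)"
    using assms by (intro inv_sqrt_less_abc_weight) auto
  moreover have "1 / sqrt (y + 1) < abc_weight (x + 1) (y + 1)"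
    using assms by (subst abc_weight_commute) (intro inv_sqrt_less_abc_weight; auto)
  ultimately show ?thesis by simp
qed

section \<open>Simple graphs and degrees\<close>

lemma simple_graph_edgeE:
  assumes "simple_graph V E" "e \<in> E"
  obtains x y where "e = {x, y}" "x \<in> V" "y \<in> V" "x \<noteq> y"
  using assms unfolding simple_graph_def by blast

lemma simple_graph_finite_vertices: "simple_graph V E \<Longrightarrow> finite V"
  unfolding simple_graph_def by simp

lemma simple_graph_edge_subset: "simple_graph V E \<Longrightarrow> e \<in> E \<Longrightarrow> e \<subseteq> V"
  by (auto elim: simple_graph_edgeE)

lemma simple_graph_no_loop: "simple_graph V E \<Longrightarrow> {x} \<notin> E"
  unfolding simple_graph_def by (metis doubleton_eq_iff insert_absorb2)

lemma simple_graph_finite_edges: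
  assumes "simple_graph V E"
  shows "finite E"
proof -
  have "E \<subseteq> Pow V" using simple_graph_edge_subset[OF assms] by blast
  moreover have "finite V" using assms by (rule simple_graph_finite_vertices)
  ultimately show ?thesis by (meson finite_Pow_iff finite_subset)
qed

lemma degree_eq_card_incident_edges:
  assumes sg: "simple_graph V E" and u: "u \<in> V"
  shows "degree V E u = card {e \<in> E. u \<in> e}"
proof -
  have "{e \<in> E. u \<in> e} = (\<lambda>v. {u, v}) ` {v \<in> V. {u, v} \<in> E}"
  proof (intro equalityI subsetI)
    fix e assume e: "e \<in> {e \<in> E. u \<in> e}"
    then obtain x y where "e = {x, y}" "x \<in> V" "y \<in> V" using sg by (auto elim: simple_graph_edgeE)
    with e show "e \<in> (\<lambda>v. {u, v}) ` {v \<in> V. {u, v} \<in> E}" by (auto simp: insert_commute)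
  qed auto
  moreover have "inj_on (\<lambda>v. {u, v}) {v \<in> V. {u, v} \<in> E}"
    by (auto simp: inj_on_def doubleton_eq_iff)
  ultimately show ?thesis unfolding degree_def by (simp add: card_image)
qed

lemma degree_le_card:
  assumes sg: "simple_graph V E" and x: "x \<in> V"
  shows "degree V E x \<le> card V - 1"
proof -
  have fin: "finite V" using sg by (rule simple_graph_finite_vertices)
  have "{y \<in> V. {x, y} \<in> E} \<subseteq> V - {x}" using simple_graph_no_loop[OF sg] by auto
  then have "degree V E x \<le> card (V - {x})" unfolding degree_def using fin by (intro card_mono) auto
  then show ?thesis using x fin by simp
qed

lemma degree_mono: "finite V \<Longrightarrow> E \<subseteq> H \<Longrightarrow> degree V E x \<le> degree V H x"
  unfolding degree_def by (intro card_mono) auto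

lemma degree_insert_edge:
  assumes u: "u \<in> V" and v: "v \<in> V" "u \<noteq> v" and new: "{u, v} \<notin> E" and fin: "finite V"
  shows "degree V (insert {u, v} E) x = degree V E x + (if x = u \<or> x = v then 1 else 0)"
proof -
  consider "x = u" | "x = v" | "x \<noteq> u" "x \<noteq> v" by blast
  then show ?thesis
  proof cases
    case 1
    then have "{w \<in> V. {x, w} \<in> insert {u, v} E} = insert v {w \<in> V. {x, w} \<in> E}"
      and "v \<notin> {w \<in> V. {x, w} \<in> E}" using u v new by (auto simp: doubleton_eq_iff)
    then show ?thesis unfolding degree_def using fin 1 by simp
  next
    case 2
    then have "{w \<in> V. {x, w} \<in> insert {u, v} E} = insert u {w \<in> V. {x, w} \<in> E}"
      and "u \<notin> {w \<in> V. {x, w} \<in> E}" using u v new by (auto simp: doubleton_eq_iff insert_commute)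
    then show ?thesis unfolding degree_def using fin 2 by simp
  next
    case 3
    then have "{w \<in> V. {x, w} \<in> insert {u, v} E} = {w \<in> V. {x, w} \<in> E}"
      by (auto simp: doubleton_eq_iff)
    then show ?thesis unfolding degree_def using 3 by simp
  qed
qed

lemma sum_incident_edges:
  fixes f :: "'a \<Rightarrow> real"
  assumes sg: "simple_graph V E"
  shows "(\<Sum>e\<in>E. \<Sum>x\<in>e \<inter> S. f x) = (\<Sum>x\<in>V \<inter> S. real (degree V E x) * f x)"
proof -
  have finV: "finite V" using sg by (rule simple_graph_finite_vertices)
  have "(\<Sum>e\<in>E. \<Sum>x\<in>e \<inter> S. f x) = (\<Sum>e\<in>E. \<Sum>x\<in>{x. x \<in> V \<inter> S \<and> x \<in> e}. f x)"
    using simple_graph_edge_subset[OF sg] by (intro sum.cong) auto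
  also have "\<dots> = (\<Sum>x\<in>V \<inter> S. \<Sum>e\<in>{e. e \<in> E \<and> x \<in> e}. f x)"
    using finV simple_graph_finite_edges[OF sg] by (intro sum.swap_restrict) auto
  also have "\<dots> = (\<Sum>x\<in>V \<inter> S. degree V E x * f x)"
    using degree_eq_card_incident_edges[OF sg] by (intro sum.cong) auto
  finally show ?thesis .
qed

definition abc_term :: "'a set \<Rightarrow> 'a set set \<Rightarrow> 'a set \<Rightarrow> real" where
  "abc_term V E e = sqrt ((real (\<Sum>u\<in>e. degree V E u) - 2) / real (\<Prod>u\<in>e. degree V E u))"

lemma ABC_eq_sum_abc_term: "ABC V E = (\<Sum>e\<in>E. abc_term V E e)"
  unfolding ABC_def abc_term_def ..

lemma abc_term_doubleton:
  "x \<noteq> y \<Longrightarrow> abc_term V E {x, y} = abc_weight (degree V E x) (degree V E y)"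
  unfolding abc_term_def abc_weight_def by simp

section \<open>Adding an edge increases the ABC index\<close>

lemma abc_term_insert_edge_ge:
  assumes sg: "simple_graph V E" and uv: "u \<in> V" "v \<in> V" "u \<noteq> v" "{u, v} \<notin> E"
    and deg: "\<forall>x\<in>V. 2 \<le> degree V E x" and e: "e \<in> E"
  shows "abc_term V E e - (\<Sum>x\<in>e \<inter> {u, v}. 1 / (2 * real (degree V E x) * sqrt (real (degree V E x) + 1)))
           \<le> abc_term V (insert {u, v} E) e"
proof -
  have finV: "finite V" using sg by (rule simple_graph_finite_vertices)
  note degI = degree_insert_edge[OF uv finV]
  obtain x y where xy: "e = {x, y}" "x \<in> V" "y \<in> V" "x \<noteq> y"
    using sg e by (auto elim: simple_graph_edgeE)
  have one_end: ?thesis if aw: "e = {a, w}" "a \<in> {u, v}" "w \<notin> {u, v}" "a \<in> V" "w \<in> V" for a w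
  proof -
    have "e \<inter> {u, v} = {a}" using aw by auto
    moreover have "abc_term V (insert {u, v} E) e = abc_weight (real (degree V E a) + 1) (degree V E w)"
      using aw by (auto simp: abc_term_doubleton degI add.commute)
    moreover have "abc_term V E e = abc_weight (degree V E a) (degree V E w)"
      using aw by (auto simp: abc_term_doubleton)
    moreover have "abc_weight (degree V E a) (degree V E w) - abc_weight (real (degree V E a) + 1) (degree V E w)
        \<le> 1 / (2 * real (degree V E a) * sqrt (real (degree V E a) + 1))"
      using deg aw by (intro abc_weight_diff_le) auto
    ultimately show ?thesis by simp
  qed
  have "\<not> (x \<in> {u, v} \<and> y \<in> {u, v})" using xy e uv by (auto simp: insert_commute)
  then consider "x \<in> {u, v}" "y \<notin> {u, v}" | "y \<in> {u, v}" "x \<notin> {u, v}" | "x \<notin> {u, v}" "y \<notin> {u, v}"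
    by blast
  then show ?thesis
  proof cases
    case 1 then show ?thesis using one_end[of x y] xy by blast
  next
    case 2 then show ?thesis using one_end[of y x] xy by (auto simp: insert_commute)
  next
    case 3 then show ?thesis using xy by (auto simp: abc_term_doubleton degI)
  qed
qed

text \<open>Each of the \<open>d(u)\<close> edges at \<open>u\<close> loses at most \<open>1 / (2 d(u) sqrt (d(u) + 1))\<close>, so all of them
  together lose at most \<open>1 / (2 sqrt (d(u) + 1))\<close>, and the same holds at \<open>v\<close>; the new edge \<open>uv\<close>
  alone contributes more than both losses together.\<close>
lemma ABC_less_insert_edge:
  assumes sg: "simple_graph V E" and uv: "u \<in> V" "v \<in> V" "u \<noteq> v" "{u, v} \<notin> E"
    and deg: "\<forall>x\<in>V. 2 \<le> degree V E x"
  shows "ABC V E < ABC V (insert {u, v} E)"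
proof -
  define d where "d x = real (degree V E x)" for x
  let ?E' = "insert {u, v} E"
  have finV: "finite V" using sg by (rule simple_graph_finite_vertices)
  have d2: "d u \<ge> 2" "d v \<ge> 2" using deg uv by (auto simp: d_def)
  define L where "L x = 1 / (2 * d x * sqrt (d x + 1))" for x
  have "ABC V E - (\<Sum>e\<in>E. \<Sum>x\<in>e \<inter> {u, v}. L x) = (\<Sum>e\<in>E. abc_term V E e - (\<Sum>x\<in>e \<inter> {u, v}. L x))"
    by (simp add: ABC_eq_sum_abc_term sum_subtractf)
  also have "\<dots> \<le> (\<Sum>e\<in>E. abc_term V ?E' e)"
    using abc_term_insert_edge_ge[OF sg uv deg] unfolding L_def d_def by (intro sum_mono) auto
  also have "(\<Sum>e\<in>E. \<Sum>x\<in>e \<inter> {u, v}. L x) = (\<Sum>x\<in>{u, v}. d x * L x)"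
    using sum_incident_edges[OF sg] uv unfolding d_def by (simp add: Int_absorb1)
  also have "\<dots> = 1 / (2 * sqrt (d u + 1)) + 1 / (2 * sqrt (d v + 1))"
    using uv d2 by (simp add: L_def)
  finally have loss: "ABC V E - (1 / (2 * sqrt (d u + 1)) + 1 / (2 * sqrt (d v + 1)))
      \<le> (\<Sum>e\<in>E. abc_term V ?E' e)" .
  have "abc_term V ?E' {u, v} = abc_weight (d u + 1) (d v + 1)"
    using uv finV by (simp add: abc_term_doubleton degree_insert_edge d_def add.commute)
  then have gain: "1 / (2 * sqrt (d u + 1)) + 1 / (2 * sqrt (d v + 1)) < abc_term V ?E' {u, v}"
    using d2 abc_weight_gain by simp
  have "ABC V ?E' = abc_term V ?E' {u, v} + (\<Sum>e\<in>E. abc_term V ?E' e)"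
    using simple_graph_finite_edges[OF sg] uv by (simp add: ABC_eq_sum_abc_term)
  with loss gain show ?thesis by linarith
qed

lemma ABC_less_supergraph:
  assumes sgH: "simple_graph V H" and sub: "E \<subset> H" and deg: "\<forall>x\<in>V. 2 \<le> degree V E x"
  shows "ABC V E < ABC V H"
  using sub deg
proof (induction "card (H - E)" arbitrary: E rule: less_induct)
  case (less E)
  have finV: "finite V" using sgH by (rule simple_graph_finite_vertices)
  have sg: "simple_graph V E"
    using sgH less.prems(1) unfolding simple_graph_def by blast
  obtain u v where uv: "{u, v} \<in> H" "{u, v} \<notin> E" "u \<in> V" "v \<in> V" "u \<noteq> v"
  proof -
    obtain e where "e \<in> H" "e \<notin> E" using less.prems(1) by blast
    moreover from sgH this(1) obtain u v where "e = {u, v}" "u \<in> V" "v \<in> V" "u \<noteq> v"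
      by (rule simple_graph_edgeE)
    ultimately show thesis using that by blast
  qed
  let ?E' = "insert {u, v} E"
  have step: "ABC V E < ABC V ?E'"
    using ABC_less_insert_edge[OF sg uv(3-5,2)] less.prems(2) by blast
  show ?case
  proof (cases "?E' = H")
    case True then show ?thesis using step by simp
  next
    case False
    then have "?E' \<subset> H" using uv less.prems(1) by auto
    moreover have "card (H - ?E') < card (H - E)"
      using simple_graph_finite_edges[OF sgH] uv by (intro psubset_card_mono) auto
    moreover have "\<forall>x\<in>V. 2 \<le> degree V ?E' x"
      using less.prems(2) degree_mono[OF finV, of E ?E'] by (meson order.trans subset_insertI)
    ultimately show ?thesis using less.hyps step by fastforce
  qed
qed

section \<open>Minimum edge cuts\<close>

lemma not_connected_if_isolated:
  assumes "x \<in> V" "y \<in> V" "x \<noteq> y" "\<forall>z. {x, z} \<notin> E"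
  shows "\<not> connected_graph V E"
proof
  assume "connected_graph V E"
  then have "(\<lambda>a b. {a, b} \<in> E)\<^sup>*\<^sup>* x y" using assms unfolding connected_graph_def by blast
  then show False by (rule converse_rtranclpE) (use assms in auto)
qed

lemma ex_other_vertex:
  assumes "finite V" "2 \<le> card V" "x \<in> V"
  obtains y where "y \<in> V" "y \<noteq> x"
proof -
  have "1 \<le> card (V - {x})" using assms by simp
  then have "V - {x} \<noteq> {}" by (metis card.empty not_one_le_zero)
  then show thesis using that by blast
qed

lemma edge_connectivity_le_degree:
  assumes sg: "simple_graph V E" and V: "2 \<le> card V" and x: "x \<in> V"
  shows "edge_connectivity V E \<le> degree V E x"
proof -
  have "finite V" using sg by (rule simple_graph_finite_vertices)
  then obtain y where y: "y \<in> V" "y \<noteq> x" using V x by (rule ex_other_vertex)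
  let ?F = "{e \<in> E. x \<in> e}"
  have "\<not> connected_graph V (E - ?F)"
    by (rule not_connected_if_isolated[OF x y(1)]) (use y in auto)
  moreover have "card ?F = degree V E x" using degree_eq_card_incident_edges[OF sg x] by simp
  moreover have "?F \<subseteq> E" by blast
  ultimately show ?thesis unfolding edge_connectivity_def by (intro Least_le) blast
qed

lemma edge_connectivity_cutE:
  assumes sg: "simple_graph V E" and V: "2 \<le> card V"
  obtains F where "F \<subseteq> E" "card F = edge_connectivity V E" "\<not> connected_graph V (E - F)"
proof -
  have "finite V" using sg by (rule simple_graph_finite_vertices)
  moreover obtain x where x: "x \<in> V" using V by fastforce
  ultimately obtain y where "y \<in> V" "y \<noteq> x" using V by (elim ex_other_vertex)
  with x have "\<not> connected_graph V (E - E)" by (intro not_connected_if_isolated) auto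
  then have "\<exists>m F. F \<subseteq> E \<and> card F = m \<and> \<not> connected_graph V (E - F)" by blast
  from LeastI_ex[OF this] show thesis using that unfolding edge_connectivity_def by blast
qed

lemma disconnected_sideE:
  assumes "\<not> connected_graph V (E - F)" "V \<noteq> {}"
  obtains A where "A \<subseteq> V" "A \<noteq> {}" "V - A \<noteq> {}"
    "\<forall>x\<in>A. \<forall>y\<in>V - A. {x, y} \<in> E \<longrightarrow> {x, y} \<in> F"
proof -
  let ?R = "(\<lambda>a b. {a, b} \<in> E - F)\<^sup>*\<^sup>*"
  obtain x y where xy: "x \<in> V" "y \<in> V" "\<not> ?R x y"
    using assms unfolding connected_graph_def by blast
  define A where "A = {z \<in> V. ?R x z}"
  have "\<forall>z\<in>A. \<forall>w\<in>V - A. {z, w} \<in> E \<longrightarrow> {z, w} \<in> F"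
    unfolding A_def by (auto intro: rtranclp.rtrancl_into_rtrancl)
  moreover have "x \<in> A" "y \<in> V - A" using xy by (auto simp: A_def)
  ultimately show thesis by (intro that[of A]) (auto simp: A_def)
qed

lemma sum_degree_le_cut:
  assumes sg: "simple_graph V E" and AV: "A \<subseteq> V"
    and cut: "\<forall>x\<in>A. \<forall>y\<in>V - A. {x, y} \<in> E \<longrightarrow> {x, y} \<in> F" and finF: "finite F"
  shows "(\<Sum>x\<in>A. degree V E x) \<le> card A * (card A - 1) + card F"
proof -
  have finV: "finite V" using sg by (rule simple_graph_finite_vertices)
  with AV have finA: "finite A" by (rule finite_subset)
  define out where "out x = {y \<in> V - A. {x, y} \<in> E}" for x
  have deg: "degree V E x \<le> (card A - 1) + card (out x)" if x: "x \<in> A" for x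
  proof -
    have "{y \<in> V. {x, y} \<in> E} = {y \<in> A. {x, y} \<in> E} \<union> out x" using AV by (auto simp: out_def)
    then have "degree V E x \<le> card {y \<in> A. {x, y} \<in> E} + card (out x)"
      unfolding degree_def by (simp only: card_Un_le)
    moreover have "card {y \<in> A. {x, y} \<in> E} \<le> card (A - {x})"
      using simple_graph_no_loop[OF sg, of x] finA by (intro card_mono) auto
    ultimately show ?thesis using x finA by simp
  qed
  have "(\<Sum>x\<in>A. card (out x)) = card (SIGMA x:A. out x)"
    using finA finV by (simp add: out_def)
  also have "\<dots> \<le> card F"
  proof (rule card_inj_on_le)
    show "inj_on (\<lambda>(x, y). {x, y}) (SIGMA x:A. out x)"
      using AV by (auto simp: inj_on_def doubleton_eq_iff out_def)
    show "(\<lambda>(x, y). {x, y}) ` (SIGMA x:A. out x) \<subseteq> F" using cut by (auto simp: out_def)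
  qed (rule finF)
  finally have "(\<Sum>x\<in>A. card (out x)) \<le> card F" .
  moreover have "(\<Sum>x\<in>A. degree V E x) \<le> (\<Sum>x\<in>A. (card A - 1) + card (out x))"
    using deg by (rule sum_mono)
  ultimately show ?thesis by (simp add: sum.distrib)
qed

lemma card_cut_side_ge:
  assumes sg: "simple_graph V E" and AV: "A \<subseteq> V" and A: "A \<noteq> {}"
    and cut: "\<forall>x\<in>A. \<forall>y\<in>V - A. {x, y} \<in> E \<longrightarrow> {x, y} \<in> F"
    and finF: "finite F" and F: "card F \<le> k" and deg: "\<forall>x\<in>V. k + 1 \<le> degree V E x"
  shows "k + 2 \<le> card A"
proof (rule ccontr)
  define a where "a = card A"
  assume "\<not> k + 2 \<le> card A"
  then have a: "1 \<le> a" "a \<le> k + 1"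
    using A AV sg unfolding a_def simple_graph_def by (auto simp: Suc_le_eq card_gt_0_iff finite_subset)
  have "a * (k + 1) = (\<Sum>x\<in>A. k + 1)" by (simp add: a_def)
  also have "\<dots> \<le> (\<Sum>x\<in>A. degree V E x)" using AV deg by (intro sum_mono) auto
  also have "\<dots> \<le> a * (a - 1) + k" using sum_degree_le_cut[OF sg AV cut finF] F by (simp add: a_def)
  finally have "a * (k + 1) \<le> a * (a - 1) + k" .
  moreover have "a * (k + 1) = a * (a - 1) + k + ((a - 1) * (k + 1 - a) + 1)"
  proof -
    obtain b c where "a = b + 1" "k = b + c" using a by (metis add.commute le_add_diff_inverse add_le_imp_le_right)
    then show ?thesis by (simp add: algebra_simps)
  qed
  ultimately show False by linarith
qed

lemma card_edges_le_cut:
  assumes sg: "simple_graph V E" and AV: "A \<subseteq> V"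
    and cut: "\<forall>x\<in>A. \<forall>y\<in>V - A. {x, y} \<in> E \<longrightarrow> {x, y} \<in> F" and finF: "finite F"
  shows "card E \<le> (card A choose 2) + (card (V - A) choose 2) + card F"
proof -
  have finV: "finite V" using sg by (rule simple_graph_finite_vertices)
  with AV have finA: "finite A" by (rule finite_subset)
  let ?P = "\<lambda>S. {e. e \<subseteq> S \<and> card e = 2}"
  have "E \<subseteq> ?P A \<union> ?P (V - A) \<union> F"
  proof
    fix e assume e: "e \<in> E"
    then obtain x y where xy: "e = {x, y}" "x \<in> V" "y \<in> V" "x \<noteq> y"
      using sg by (auto elim: simple_graph_edgeE)
    then show "e \<in> ?P A \<union> ?P (V - A) \<union> F"
      using cut e by (cases "x \<in> A"; cases "y \<in> A") (auto simp: insert_commute)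
  qed
  then have "card E \<le> card (?P A \<union> ?P (V - A) \<union> F)"
    using finA finV finF by (intro card_mono) auto
  also have "\<dots> \<le> card (?P A) + card (?P (V - A)) + card F"
    using card_Un_le[of "?P A \<union> ?P (V - A)" F] card_Un_le[of "?P A" "?P (V - A)"] by linarith
  also have "\<dots> = (card A choose 2) + (card (V - A) choose 2) + card F"
    using finA finV by (simp add: n_subsets)
  finally show ?thesis .
qed

lemma real_choose_two: "real (a choose 2) = real a * (real a - 1) / 2"
  by (cases a) (simp_all add: choose_two real_of_nat_div algebra_simps)

text \<open>When every degree exceeds the edge-connectivity \<open>k\<close>, both sides of a minimum cut have at
  least \<open>k + 2\<close> vertices, and only the \<open>k\<close> cut edges join them.\<close>
lemma card_edges_le_if_degree_gt:
  assumes sg: "simple_graph V E" and n: "card V = n" "2 \<le> n" and ec: "edge_connectivity V E = k"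
    and deg: "\<forall>x\<in>V. k + 1 \<le> degree V E x"
  shows "2 * k + 4 \<le> n"
    and "real (card E) \<le> real n * (real n - 1) / 2 - (real k + 2) * (real n - real k - 2) + real k"
proof -
  obtain F where F: "F \<subseteq> E" "card F = k" "\<not> connected_graph V (E - F)"
    using edge_connectivity_cutE[OF sg] n ec by auto
  have finF: "finite F" using F(1) simple_graph_finite_edges[OF sg] by (rule finite_subset)
  obtain A where A: "A \<subseteq> V" "A \<noteq> {}" "V - A \<noteq> {}"
    and cut: "\<forall>x\<in>A. \<forall>y\<in>V - A. {x, y} \<in> E \<longrightarrow> {x, y} \<in> F"
    using F(3) n by (elim disconnected_sideE) auto
  have cut': "\<forall>x\<in>V - A. \<forall>y\<in>V - (V - A). {x, y} \<in> E \<longrightarrow> {x, y} \<in> F"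
  proof (intro ballI impI)
    fix x y assume "x \<in> V - A" "y \<in> V - (V - A)" "{x, y} \<in> E"
    then show "{x, y} \<in> F" using cut A(1) by (metis Diff_iff insert_commute)
  qed
  have Fk: "card F \<le> k" using F(2) by simp
  have a: "k + 2 \<le> card A" using card_cut_side_ge[OF sg A(1,2) cut finF Fk deg] .
  have b: "k + 2 \<le> card (V - A)" using card_cut_side_ge[OF sg _ A(3) cut' finF Fk deg] by blast
  have "finite V" using sg by (rule simple_graph_finite_vertices)
  then have ab: "card A + card (V - A) = n"
    using A(1) n card_mono[of V A] by (simp add: card_Diff_subset finite_subset)
  then show "2 * k + 4 \<le> n" using a b by simp
  define a' b' where "a' = real (card A)" and "b' = real (card (V - A))"
  have E_le: "real (card E) \<le> a' * (a' - 1) / 2 + b' * (b' - 1) / 2 + real k"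
    using card_edges_le_cut[OF sg A(1) cut finF] F(2)
    unfolding a'_def b'_def by (simp flip: real_choose_two of_nat_add)
  have n_eq: "real n = a' + b'" using ab unfolding a'_def b'_def by (simp flip: of_nat_add)
  have "a' * (a' - 1) / 2 + b' * (b' - 1) / 2 = real n * (real n - 1) / 2 - a' * b'"
    unfolding n_eq by (simp add: field_simps)
  moreover have "(real k + 2) * (real n - real k - 2) \<le> a' * b'"
  proof -
    have "0 \<le> (a' - (real k + 2)) * (b' - (real k + 2))"
      using a b unfolding a'_def b'_def by (intro mult_nonneg_nonneg) simp_all
    then show ?thesis unfolding n_eq by (simp add: algebra_simps)
  qed
  ultimately show "real (card E) \<le> real n * (real n - 1) / 2 - (real k + 2) * (real n - real k - 2) + real k"
    using E_le by linarith
qed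

section \<open>Minimum degree above the edge-connectivity\<close>

lemma abc_term_sq:
  assumes sg: "simple_graph V E" and e: "e \<in> E" and deg: "\<forall>x\<in>V. 1 \<le> degree V E x"
  shows "(abc_term V E e)\<^sup>2 = (\<Sum>x\<in>e. 1 / real (degree V E x)) - 2 / real (\<Prod>x\<in>e. degree V E x)"
proof -
  obtain x y where xy: "e = {x, y}" "x \<in> V" "y \<in> V" "x \<noteq> y"
    using sg e by (auto elim: simple_graph_edgeE)
  define a b where "a = real (degree V E x)" and "b = real (degree V E y)"
  have ab: "a \<ge> 1" "b \<ge> 1" using deg xy by (auto simp: a_def b_def)
  have "(abc_term V E e)\<^sup>2 = (a + b - 2) / (a * b)"
    using xy ab by (simp add: abc_term_doubleton abc_weight_sq a_def b_def)
  also have "\<dots> = 1 / a + 1 / b - 2 / (a * b)" using ab by (simp add: field_simps)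
  finally show ?thesis using xy by (simp add: a_def b_def)
qed

text \<open>Cauchy--Schwarz, together with \<open>d(u) d(v) \<le> (n - 1)\<^sup>2\<close> and the fact that \<open>1/d(u) + 1/d(v)\<close>
  summed over all edges \<open>uv\<close> gives \<open>n\<close>.\<close>
lemma ABC_sq_le:
  assumes sg: "simple_graph V E" and n: "card V = n" "2 \<le> n" and deg: "\<forall>x\<in>V. 1 \<le> degree V E x"
  shows "(ABC V E)\<^sup>2 \<le> real (card E) * (real n - 2 * real (card E) / (real n - 1)\<^sup>2)"
proof -
  have prod_le: "2 / (real n - 1)\<^sup>2 \<le> 2 / real (\<Prod>x\<in>e. degree V E x)" if e: "e \<in> E" for e
  proof -
    obtain x y where xy: "e = {x, y}" "x \<in> V" "y \<in> V" "x \<noteq> y"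
      using sg e by (auto elim: simple_graph_edgeE)
    have "real (degree V E x) \<le> real n - 1" "real (degree V E y) \<le> real n - 1"
      using degree_le_card[OF sg xy(2)] degree_le_card[OF sg xy(3)] n by linarith+
    moreover have "real (degree V E x) \<ge> 1" "real (degree V E y) \<ge> 1" using deg xy by auto
    ultimately have "real (degree V E x) * real (degree V E y) \<le> (real n - 1)\<^sup>2"
      by (simp add: power2_eq_square mult_mono)
    moreover have "real (degree V E x) * real (degree V E y) > 0"
      using deg xy by (simp add: Suc_le_eq)
    ultimately show ?thesis using xy by (simp add: frac_le)
  qed
  have "(\<Sum>e\<in>E. (abc_term V E e)\<^sup>2)
      = (\<Sum>e\<in>E. \<Sum>x\<in>e \<inter> V. 1 / real (degree V E x)) - (\<Sum>e\<in>E. 2 / real (\<Prod>x\<in>e. degree V E x))"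
    using abc_term_sq[OF sg _ deg] simple_graph_edge_subset[OF sg]
    by (simp add: sum_subtractf Int_absorb2)
  also have "(\<Sum>e\<in>E. \<Sum>x\<in>e \<inter> V. 1 / real (degree V E x)) = (\<Sum>x\<in>V. 1)"
    unfolding sum_incident_edges[OF sg] using deg by (intro sum.cong) auto
  also have "\<dots> = real n" using n by simp
  also have "\<dots> - (\<Sum>e\<in>E. 2 / real (\<Prod>x\<in>e. degree V E x)) \<le> real n - (\<Sum>e\<in>E. 2 / (real n - 1)\<^sup>2)"
    using sum_mono[OF prod_le] by simp
  finally have "(\<Sum>e\<in>E. (abc_term V E e)\<^sup>2) \<le> real n - 2 * real (card E) / (real n - 1)\<^sup>2"
    by (simp add: mult.commute)
  moreover have "(ABC V E)\<^sup>2 \<le> (\<Sum>e\<in>E. (abc_term V E e)\<^sup>2) * real (card E)"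
    unfolding ABC_eq_sum_abc_term by (rule sum_squared_le_sum_of_squares)
  ultimately show ?thesis by (simp add: mult.commute mult_left_mono order_trans)
qed

definition ABC_bound :: "nat \<Rightarrow> nat \<Rightarrow> real" where
  "ABC_bound n k = k * sqrt ((real n + k - 3) / (k * (real n - 1)))
            + (k * (real k - 1)) / (2 * (real n - 1)) * sqrt (2 * real n - 4)
            + ((real n - k - 1) * (real n - k - 2)) / (2 * (real n - 2)) * sqrt (2 * real n - 6)
            + k * (real n - k - 1) * sqrt ((2 * real n - 5) / ((real n - 1) * (real n - 2)))"

text \<open>The extremal graph has \<open>(n - 1)(n - 2)/2 + k\<close> edges, each weighing at least
  \<open>sqrt (2n - 4) / (n - 1)\<close>, the weight of an edge of \<open>K\<^sub>n\<^sub>-\<^sub>1\<close>.\<close>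
lemma ABC_bound_ge:
  assumes k: "2 \<le> k" "k + 2 \<le> n" and n: "6 \<le> n"
  shows "((real n - 1) * (real n - 2) / 2 + k) * (sqrt (2 * real n - 4) / (real n - 1)) \<le> ABC_bound n k"
proof -
  define N K where "N = real n" and "K = real k"
  have N: "N \<ge> 6" and K: "K \<ge> 2" "K + 2 \<le> N" using k n by (simp_all add: N_def K_def)
  define t where "t = sqrt (2 * N - 4) / (N - 1)"
  have t: "t = sqrt ((2 * N - 4) / (N - 1)\<^sup>2)" using N by (simp add: t_def real_sqrt_divide)
  have T1: "K * t \<le> K * sqrt ((N + K - 3) / (K * (N - 1)))"
  proof -
    have "0 \<le> (N - 3) * (N - 1 - K) * (N - 1)" using N K by simp
    then have "(2 * N - 4) * (K * (N - 1)) \<le> (N + K - 3) * (N - 1)\<^sup>2"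
      by (simp add: power2_eq_square algebra_simps)
    then have "(2 * N - 4) / (N - 1)\<^sup>2 \<le> (N + K - 3) / (K * (N - 1))"
      using N K by (simp add: divide_simps)
    then show ?thesis unfolding t using K by (intro mult_left_mono) auto
  qed
  have T2: "(K * (K - 1)) / (2 * (N - 1)) * sqrt (2 * N - 4) = (K * (K - 1) / 2) * t"
    unfolding t_def using N by simp
  have T3: "((N - K - 1) * (N - K - 2) / 2) * t
      \<le> ((N - K - 1) * (N - K - 2)) / (2 * (N - 2)) * sqrt (2 * N - 6)"
  proof -
    have "0 \<le> (N - 5) * N" using N by simp
    then have "(2 * N - 4) * (N - 2)\<^sup>2 \<le> (2 * N - 6) * (N - 1)\<^sup>2"
      by (simp add: power2_eq_square algebra_simps)
    then have "(2 * N - 4) / (N - 1)\<^sup>2 \<le> (2 * N - 6) / (N - 2)\<^sup>2"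
      using N by (simp add: divide_simps)
    then have "t \<le> sqrt ((2 * N - 6) / (N - 2)\<^sup>2)" unfolding t by simp
    also have "\<dots> = sqrt (2 * N - 6) / (N - 2)" using N by (simp add: real_sqrt_divide)
    finally have "t \<le> sqrt (2 * N - 6) / (N - 2)" .
    moreover have "(N - K - 1) * (N - K - 2) / 2 \<ge> 0" using K by simp
    ultimately have "((N - K - 1) * (N - K - 2) / 2) * t
        \<le> ((N - K - 1) * (N - K - 2) / 2) * (sqrt (2 * N - 6) / (N - 2))"
      by (rule mult_left_mono)
    then show ?thesis by simp
  qed
  have T4: "(K * (N - K - 1)) * t \<le> K * (N - K - 1) * sqrt ((2 * N - 5) / ((N - 1) * (N - 2)))"
  proof -
    have "0 \<le> (N - 3) * (N - 1)" using N by simp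
    then have "(2 * N - 4) * ((N - 1) * (N - 2)) \<le> (2 * N - 5) * (N - 1)\<^sup>2"
      by (simp add: power2_eq_square algebra_simps)
    then have "(2 * N - 4) / (N - 1)\<^sup>2 \<le> (2 * N - 5) / ((N - 1) * (N - 2))"
      using N by (simp add: divide_simps)
    then show ?thesis unfolding t using K by (intro mult_left_mono) auto
  qed
  have "((N - 1) * (N - 2) / 2 + K) * t
      = K * t + (K * (K - 1) / 2) * t + ((N - K - 1) * (N - K - 2) / 2) * t + (K * (N - K - 1)) * t"
    by (simp add: field_simps)
  also have "\<dots> \<le> ABC_bound n k"
    unfolding ABC_bound_def N_def[symmetric] K_def[symmetric] using T1 T2 T3 T4 by linarith
  finally show ?thesis by (simp add: N_def K_def t_def)
qed

text \<open>After the substitution \<open>n = p + 2q + 8\<close>, \<open>k = q + 2\<close>, the difference of the two sides is a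
  polynomial in \<open>p, q \<ge> 0\<close> with positive coefficients.\<close>
lemma edge_bound_gap:
  fixes p q :: nat
  defines "N \<equiv> real p + 2 * real q + 8" and "K \<equiv> real q + 2"
  defines "M \<equiv> N * (N - 1) / 2 - (K + 2) * (N - K - 2) + K"
  shows "M * (N * (N - 1)\<^sup>2 - 2 * M) < ((N - 1) * (N - 2) / 2 + K)\<^sup>2 * (2 * N - 4)"
proof -
  have "((N - 1) * (N - 2) / 2 + K)\<^sup>2 * (2 * N - 4) - M * (N * (N - 1)\<^sup>2 - 2 * M)
     = real (1252 + 2648 * q + 2016 * q^2 + 718 * q^3 + 122 * q^4 + 8 * q^4 * q
        + 1216 * p + 1901 * p * q + 1039 * p * q^2 + 240 * p * q^3 + 20 * p * q^4
        + 366 * p^2 + 429 * p^2 * q + 156 * p^2 * q^2 + 18 * p^2 * q^3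
        + 44 * p^3 + 37 * p^3 * q + 7 * p^3 * q^2 + 2 * p^4 + p^4 * q)"
    unfolding N_def K_def M_def
    by (simp add: field_simps power2_eq_square power3_eq_cube power4_eq_xxxx)
  also have "\<dots> > 0" by (simp only: of_nat_0_less_iff)
  finally show ?thesis by simp
qed

lemma less_ABC_bound_if_few_edges:
  fixes m X :: real
  assumes k: "2 \<le> k" and n: "2 * k + 4 \<le> n"
    and m: "0 \<le> m" "m \<le> real n * (real n - 1) / 2 - (real k + 2) * (real n - real k - 2) + real k"
    and X: "0 \<le> X" "X\<^sup>2 \<le> m * (real n - 2 * m / (real n - 1)\<^sup>2)"
  shows "X < ABC_bound n k"
proof -
  define N K D where "N = real n" and "K = real k" and "D = (N - 1)\<^sup>2"
  define M where "M = N * (N - 1) / 2 - (K + 2) * (N - K - 2) + K"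
  define e where "e = (N - 1) * (N - 2) / 2 + K"
  define t where "t = sqrt (2 * N - 4) / (N - 1)"
  have N: "N \<ge> 2 * K + 4" "N \<ge> 8" and K: "K \<ge> 2" using n k by (simp_all add: N_def K_def)
  have D: "D > 0" using N by (simp add: D_def)
  have mM: "m \<le> M" using m by (simp add: M_def N_def K_def)
  have M_le: "M \<le> N * (N - 1) / 2"
  proof -
    have "(K + 2) * 2 \<le> (K + 2) * (N - K - 2)" using N K by (intro mult_left_mono) auto
    moreover have "(K + 2) * 2 = 2 * K + 4" by simp
    ultimately show ?thesis unfolding M_def using K by linarith
  qed
  \<comment> \<open>\<open>m (n - 2m / D)\<close> increases for \<open>m \<le> n D / 4\<close>, a range containing \<open>M \<le> n (n - 1) / 2\<close>.\<close>
  have "m * (N - 2 * m / D) \<le> M * (N - 2 * M / D)"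
  proof -
    have "N * (N - 1) * 2 \<le> N * (N - 1) * (N - 1)" using N by (intro mult_left_mono) auto
    then have "2 * (M + m) \<le> N * D" using M_le mM by (simp add: D_def power2_eq_square algebra_simps)
    then have "2 * (M + m) / D \<le> N" using D by (simp add: divide_le_eq)
    then have "0 \<le> (M - m) * (N - 2 * (M + m) / D)" using mM by simp
    then show ?thesis by (simp add: algebra_simps add_divide_distrib diff_divide_distrib)
  qed
  also have "M * (N - 2 * M / D) = M * (N * D - 2 * M) / D" using D by (simp add: field_simps)
  also have "\<dots> < e\<^sup>2 * (2 * N - 4) / D"
  proof -
    have "N = real (n - 2 * k - 4) + 2 * real (k - 2) + 8" "K = real (k - 2) + 2"
      using n k by (simp_all add: N_def K_def of_nat_diff)
    then have "M * (N * D - 2 * M) < e\<^sup>2 * (2 * N - 4)"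
      using edge_bound_gap[of "n - 2 * k - 4" "k - 2"] unfolding M_def e_def D_def by simp
    then show ?thesis using D by (simp add: divide_strict_right_mono)
  qed
  also have "\<dots> = (e * t)\<^sup>2" using N by (simp add: t_def D_def power_mult_distrib power_divide)
  finally have "X < e * t"
    using X N K by (intro power_less_imp_less_base[of X 2]) (auto simp: N_def D_def e_def t_def)
  also have "e * t \<le> ABC_bound n k" using ABC_bound_ge[of k n] k n by (simp add: e_def t_def N_def K_def)
  finally show ?thesis .
qed

lemma ABC_nonneg:
  assumes sg: "simple_graph V E" and deg: "\<forall>x\<in>V. 1 \<le> degree V E x"
  shows "0 \<le> ABC V E"
  unfolding ABC_eq_sum_abc_term
proof (rule sum_nonneg)
  fix e assume "e \<in> E"
  then obtain x y where "e = {x, y}" "x \<in> V" "y \<in> V" "x \<noteq> y" using sg by (elim simple_graph_edgeE)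
  then show "0 \<le> abc_term V E e" using deg by (simp add: abc_term_doubleton abc_weight_nonneg)
qed

lemma ABC_less_bound_if_degree_gt:
  assumes sg: "simple_graph V E" and n: "card V = n" "6 \<le> n"
    and k: "edge_connectivity V E = k" "2 \<le> k" and deg: "\<forall>x\<in>V. k + 1 \<le> degree V E x"
  shows "ABC V E < ABC_bound n k"
proof -
  have deg1: "\<forall>x\<in>V. 1 \<le> degree V E x" using deg by auto
  have n2: "2 \<le> n" using n by simp
  show ?thesis
  proof (rule less_ABC_bound_if_few_edges)
    show "2 * k + 4 \<le> n" "real (card E)
        \<le> real n * (real n - 1) / 2 - (real k + 2) * (real n - real k - 2) + real k"
      using card_edges_le_if_degree_gt[OF sg n(1) n2 k(1) deg] by auto
    show "(ABC V E)\<^sup>2 \<le> real (card E) * (real n - 2 * real (card E) / (real n - 1)\<^sup>2)"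
      using ABC_sq_le[OF sg n(1) n2 deg1] .
  qed (use k ABC_nonneg[OF sg deg1] in auto)
qed

section \<open>The extremal graph\<close>

lemma graph_iso_edges_image:
  assumes sg: "simple_graph V E" and sgW: "simple_graph W F" and f: "bij_betw f V W"
    and adj: "\<forall>u\<in>V. \<forall>v\<in>V. {u, v} \<in> E \<longleftrightarrow> {f u, f v} \<in> F"
  shows "F = (\<lambda>e. f ` e) ` E"
proof (intro equalityI subsetI)
  fix e' assume "e' \<in> F"
  then obtain a b where ab: "e' = {a, b}" "a \<in> W" "b \<in> W" using sgW by (elim simple_graph_edgeE)
  then obtain x y where xy: "x \<in> V" "y \<in> V" "a = f x" "b = f y"
    using f unfolding bij_betw_def by blast
  then have "{x, y} \<in> E" using adj \<open>e' \<in> F\<close> ab by simp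
  then show "e' \<in> (\<lambda>e. f ` e) ` E" using ab xy by (intro image_eqI[of _ _ "{x, y}"]) auto
next
  fix e' assume "e' \<in> (\<lambda>e. f ` e) ` E"
  then obtain e where e: "e \<in> E" "e' = f ` e" by blast
  then obtain x y where "e = {x, y}" "x \<in> V" "y \<in> V" using sg by (elim simple_graph_edgeE)
  then show "e' \<in> F" using adj e by simp
qed

lemma graph_iso_degree:
  assumes f: "bij_betw f V W" and adj: "\<forall>u\<in>V. \<forall>v\<in>V. {u, v} \<in> E \<longleftrightarrow> {f u, f v} \<in> F"
    and x: "x \<in> V"
  shows "degree W F (f x) = degree V E x"
proof -
  have "{w \<in> W. {f x, w} \<in> F} = f ` {y \<in> V. {x, y} \<in> E}"
    using f adj x unfolding bij_betw_def by auto
  moreover have "inj_on f {y \<in> V. {x, y} \<in> E}"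
    using f unfolding bij_betw_def by (rule inj_on_subset[OF conjunct1]) auto
  ultimately show ?thesis unfolding degree_def by (simp add: card_image)
qed

lemma ABC_graph_iso:
  assumes sg: "simple_graph V E" and sgW: "simple_graph W F" and iso: "graph_iso V E W F"
  shows "ABC V E = ABC W F"
proof -
  obtain f where f: "bij_betw f V W" and adj: "\<forall>u\<in>V. \<forall>v\<in>V. {u, v} \<in> E \<longleftrightarrow> {f u, f v} \<in> F"
    using iso unfolding graph_iso_def by blast
  have inj: "inj_on f V" using f by (simp add: bij_betw_def)
  have "inj_on (\<lambda>e. f ` e) E"
    using inj simple_graph_edge_subset[OF sg] by (intro inj_onI) (meson inj_on_image_eq_iff)
  then have "ABC W F = (\<Sum>e\<in>E. abc_term W F (f ` e))"
    unfolding ABC_eq_sum_abc_term graph_iso_edges_image[OF sg sgW f adj] by (simp add: sum.reindex)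
  also have "\<dots> = (\<Sum>e\<in>E. abc_term V E e)"
  proof (rule sum.cong)
    fix e assume "e \<in> E"
    then obtain x y where xy: "e = {x, y}" "x \<in> V" "y \<in> V" "x \<noteq> y" using sg by (elim simple_graph_edgeE)
    then have "f x \<noteq> f y" using inj by (meson inj_on_contraD)
    then show "abc_term W F (f ` e) = abc_term V E e"
      using xy by (simp add: abc_term_doubleton graph_iso_degree[OF f adj])
  qed simp
  finally show ?thesis by (simp add: ABC_eq_sum_abc_term)
qed

lemma mem_join_graph_edges:
  "{a, b} \<in> join_graph_edges n k \<longleftrightarrow>
     a < n \<and> b < n \<and> a \<noteq> b \<and> \<not> (a = k \<and> k < b) \<and> \<not> (b = k \<and> k < a)"
  unfolding join_graph_edges_def by (auto simp: doubleton_eq_iff)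

lemma simple_graph_join: "simple_graph {0..<n} (join_graph_edges n k)"
  unfolding simple_graph_def join_graph_edges_def by auto

lemma degree_join:
  assumes "k < n" "i < n"
  shows "degree {0..<n} (join_graph_edges n k) i = (if i < k then n - 1 else if i = k then k else n - 2)"
proof -
  have "{j \<in> {0..<n}. {i, j} \<in> join_graph_edges n k}
      = (if i < k then {0..<n} - {i} else if i = k then {0..<k} else {0..<n} - {i, k})"
    using assms by (auto simp: mem_join_graph_edges)
  then show ?thesis unfolding degree_def using assms by (simp add: card_Diff_subset numeral_2_eq_2)
qed

lemma join_graph_edges_eq_image:
  "join_graph_edges n k = (\<lambda>(j, i). {i, j}) ` (SIGMA j:{..<n}. {i. i < j \<and> i \<noteq> k})"
proof (intro equalityI subsetI)
  fix e assume "e \<in> join_graph_edges n k"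
  then obtain i j where e: "e = {i, j}" "i < n" "j < n" "i \<noteq> j" "\<not> (i = k \<and> k < j)" "\<not> (j = k \<and> k < i)"
    unfolding join_graph_edges_def by blast
  show "e \<in> (\<lambda>(j, i). {i, j}) ` (SIGMA j:{..<n}. {i. i < j \<and> i \<noteq> k})"
  proof (cases "i < j")
    case True then show ?thesis using e by (intro image_eqI[of _ _ "(j, i)"]) auto
  next
    case False then show ?thesis using e by (intro image_eqI[of _ _ "(i, j)"]) (auto simp: insert_commute)
  qed
qed (auto simp: mem_join_graph_edges)

lemma join_row_sum:
  assumes "k < n" "j < n"
  shows "(\<Sum>i | i < j \<and> i \<noteq> k. abc_term {0..<n} (join_graph_edges n k) {i, j})
    = (if j < k then j * abc_weight (real n - 1) (real n - 1)
       else if j = k then k * abc_weight (real n - 1) k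
       else k * abc_weight (real n - 1) (real n - 2) + (real j - k - 1) * abc_weight (real n - 2) (real n - 2))"
proof -
  have d: "real (degree {0..<n} (join_graph_edges n k) i)
      = (if i < k then real n - 1 else if i = k then real k else real n - 2)" if "i < n" for i
  proof -
    have "i > k \<Longrightarrow> 2 \<le> n" using that by linarith
    then show ?thesis using degree_join[OF assms(1) that] assms by (auto simp: of_nat_diff)
  qed
  have weight: "abc_term {0..<n} (join_graph_edges n k) {i, j}
      = abc_weight (if i < k then real n - 1 else if i = k then real k else real n - 2)
                   (if j < k then real n - 1 else if j = k then real k else real n - 2)" if "i < j" for i
    using that assms d[of i] d[of j] by (simp add: abc_term_doubleton)
  show ?thesis
  proof (cases "j \<le> k")
    case True
    then have "{i. i < j \<and> i \<noteq> k} = {..<j}" by auto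
    with True show ?thesis by (auto simp: weight abc_weight_commute)
  next
    case False
    then have "{i. i < j \<and> i \<noteq> k} = {..<k} \<union> {k<..<j}" by auto
    moreover have "(\<Sum>i\<in>{..<k} \<union> {k<..<j}. abc_term {0..<n} (join_graph_edges n k) {i, j})
        = (\<Sum>i\<in>{..<k}. abc_weight (real n - 1) (real n - 2)) + (\<Sum>i\<in>{k<..<j}. abc_weight (real n - 2) (real n - 2))"
      using False by (subst sum.union_disjoint) (auto simp: weight intro!: sum.cong)
    ultimately show ?thesis using False by (simp add: of_nat_diff)
  qed
qed

lemma sum_join_rows:
  fixes a b c d :: real
  assumes "Suc k \<le> N"
  shows "(\<Sum>j<N. if j < k then j * a else if j = k then k * b else k * c + (real j - k - 1) * d)
    = real k * (real k - 1) / 2 * a + k * b + (real N - k - 1) * k * c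
      + (real N - k - 1) * (real N - k - 2) / 2 * d"
  using assms
proof (induction N rule: dec_induct)
  case base
  have "(\<Sum>j<k. real j) = real k * (real k - 1) / 2" by (induction k) (simp_all add: field_simps)
  then show ?case by (simp add: sum_distrib_right[symmetric])
next
  case (step N)
  then show ?case by (simp add: field_simps)
qed

lemma ABC_join:
  assumes "2 \<le> k" "k < n"
  shows "ABC {0..<n} (join_graph_edges n k) = ABC_bound n k"
proof -
  let ?J = "join_graph_edges n k"
  have n: "real n - 1 > 0" "real n - 2 > 0" using assms by auto
  have "inj_on (\<lambda>(j, i). {i, j}) (SIGMA j:{..<n}. {i. i < j \<and> i \<noteq> k})"
    by (auto simp: inj_on_def doubleton_eq_iff)
  then have "ABC {0..<n} ?J = (\<Sum>(j, i)\<in>(SIGMA j:{..<n}. {i. i < j \<and> i \<noteq> k}). abc_term {0..<n} ?J {i, j})"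
    unfolding ABC_eq_sum_abc_term by (subst join_graph_edges_eq_image) (simp add: sum.reindex case_prod_unfold)
  also have "\<dots> = (\<Sum>j<n. \<Sum>i | i < j \<and> i \<noteq> k. abc_term {0..<n} ?J {i, j})"
    by (subst sum.Sigma) auto
  also have "\<dots> = real k * (real k - 1) / 2 * abc_weight (real n - 1) (real n - 1)
      + k * abc_weight (real n - 1) k + (real n - k - 1) * k * abc_weight (real n - 1) (real n - 2)
      + (real n - k - 1) * (real n - k - 2) / 2 * abc_weight (real n - 2) (real n - 2)"
    using assms by (simp add: join_row_sum sum_join_rows)
  also have "\<dots> = ABC_bound n k"
  proof -
    have "abc_weight (real n - 1) (real n - 1) = sqrt (2 * real n - 4) / (real n - 1)"
      "abc_weight (real n - 2) (real n - 2) = sqrt (2 * real n - 6) / (real n - 2)"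
      unfolding abc_weight_def using n by (simp_all add: real_sqrt_divide flip: power2_eq_square)
    moreover have "abc_weight (real n - 1) k = sqrt ((real n + k - 3) / (k * (real n - 1)))"
      "abc_weight (real n - 1) (real n - 2) = sqrt ((2 * real n - 5) / ((real n - 1) * (real n - 2)))"
      unfolding abc_weight_def by (simp_all add: algebra_simps)
    ultimately show ?thesis unfolding ABC_bound_def by (simp add: field_simps)
  qed
  finally show ?thesis .
qed

definition complete_except :: "'a set \<Rightarrow> 'a set set \<Rightarrow> 'a \<Rightarrow> 'a set set" where
  "complete_except V E v = {{x, y} | x y. x \<in> V \<and> y \<in> V \<and> x \<noteq> y \<and> (v \<in> {x, y} \<longrightarrow> {x, y} \<in> E)}"

lemma mem_complete_except:
  "{a, b} \<in> complete_except V E v \<longleftrightarrow> a \<in> V \<and> b \<in> V \<and> a \<noteq> b \<and> (v \<in> {a, b} \<longrightarrow> {a, b} \<in> E)"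
  unfolding complete_except_def by (auto simp: doubleton_eq_iff insert_commute)

lemma simple_graph_complete_except: "finite V \<Longrightarrow> simple_graph V (complete_except V E v)"
  unfolding simple_graph_def complete_except_def by blast

lemma subset_complete_except: "simple_graph V E \<Longrightarrow> E \<subseteq> complete_except V E v"
  by (auto elim!: simple_graph_edgeE simp: mem_complete_except)

lemma ex_bij_betw_blocks:
  assumes finV: "finite V" and n: "card V = n" and v: "v \<in> V" and N: "N \<subseteq> V" "v \<notin> N" "card N = k"
  obtains f where "bij_betw f V {0..<n}" "\<forall>x\<in>V. f x = k \<longleftrightarrow> x = v" "\<forall>x\<in>V. f x < k \<longleftrightarrow> x \<in> N"
proof -
  define R where "R = V - N - {v}"
  have finN: "finite N" and finR: "finite R" using finV N(1) by (auto simp: R_def finite_subset)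
  have "N \<subset> V" using N v by auto
  then have "k < n" using psubset_card_mono[OF finV] N(3) n by blast
  have cR: "card R = card {k<..<n}"
    using finV finN N n v unfolding R_def by (simp add: card_Diff_subset card_Diff_singleton_if)
  obtain g1 where g1: "bij_betw g1 N {0..<k}" using finite_same_card_bij[OF finN] N(3) by force
  obtain g2 where g2: "bij_betw g2 R {k<..<n}" using finite_same_card_bij[OF finR _ cR] by blast
  define f where "f x = (if x = v then k else if x \<in> N then g1 x else g2 x)" for x
  have "bij_betw f {v} {k}" by (simp add: f_def bij_betw_def)
  moreover have "bij_betw f N {0..<k}"
    using g1 by (subst bij_betw_cong[of N f g1]) (use N(2) in \<open>auto simp: f_def\<close>)
  moreover have "bij_betw f R {k<..<n}"
    using g2 by (subst bij_betw_cong[of R f g2]) (auto simp: f_def R_def)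
  ultimately have "bij_betw f ({v} \<union> N \<union> R) ({k} \<union> {0..<k} \<union> {k<..<n})"
    by (intro bij_betw_combine) auto
  moreover have "{v} \<union> N \<union> R = V" "{k} \<union> {0..<k} \<union> {k<..<n} = {0..<n}"
    using v N \<open>k < n\<close> by (auto simp: R_def)
  ultimately have f: "bij_betw f V {0..<n}" by simp
  have g1: "g1 x < k" if "x \<in> N" for x using bij_betwE[OF g1] that by auto
  have g2: "k < g2 x" if "x \<in> R" for x using bij_betwE[OF g2] that by auto
  have "(f x = k \<longleftrightarrow> x = v) \<and> (f x < k \<longleftrightarrow> x \<in> N)" if x: "x \<in> V" for x
  proof -
    consider "x = v" | "x \<in> N" | "x \<in> R" using x unfolding R_def by blast
    then show ?thesis by cases (use N(2) g1 g2 in \<open>force simp: f_def R_def\<close>)+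
  qed
  with f show thesis using that by blast
qed

text \<open>Number the neighbours of \<open>v\<close> by \<open>0, \<dots>, k - 1\<close> and \<open>v\<close> itself by \<open>k\<close>.\<close>
lemma complete_except_iso_join:
  assumes sg: "simple_graph V E" and n: "card V = n" and v: "v \<in> V" and k: "degree V E v = k"
  shows "graph_iso V (complete_except V E v) {0..<n} (join_graph_edges n k)"
proof -
  define N where "N = {w \<in> V. {v, w} \<in> E}"
  have finV: "finite V" using sg by (rule simple_graph_finite_vertices)
  have "v \<notin> N" using simple_graph_no_loop[OF sg, of v] by (simp add: N_def)
  moreover have "card N = k" using k by (simp add: N_def degree_def)
  moreover have "N \<subseteq> V" by (simp add: N_def)
  ultimately obtain f where f: "bij_betw f V {0..<n}"
    and f_k: "\<forall>x\<in>V. f x = k \<longleftrightarrow> x = v" and f_less: "\<forall>x\<in>V. f x < k \<longleftrightarrow> x \<in> N"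
    using ex_bij_betw_blocks[OF finV n v] by blast
  have f_greater: "k < f z \<longleftrightarrow> z \<noteq> v \<and> z \<notin> N" if "z \<in> V" for z
  proof -
    have "k < f z \<longleftrightarrow> \<not> f z = k \<and> \<not> f z < k" by linarith
    then show ?thesis using f_k f_less that by simp
  qed
  have "{x, y} \<in> complete_except V E v \<longleftrightarrow> {f x, f y} \<in> join_graph_edges n k"
    if xy: "x \<in> V" "y \<in> V" for x y
  proof -
    have "f x = f y \<longleftrightarrow> x = y" using xy f by (auto simp: bij_betw_def dest: inj_onD)
    moreover have "f x < n" "f y < n" using xy f by (auto dest: bij_betwE)
    ultimately have "{f x, f y} \<in> join_graph_edges n k
        \<longleftrightarrow> x \<noteq> y \<and> \<not> (x = v \<and> y \<noteq> v \<and> y \<notin> N) \<and> \<not> (y = v \<and> x \<noteq> v \<and> x \<notin> N)"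
      unfolding mem_join_graph_edges using xy f_k f_greater[OF xy(1)] f_greater[OF xy(2)] by auto
    moreover have "{x, y} \<in> complete_except V E v \<longleftrightarrow> x \<noteq> y \<and> (x = v \<longrightarrow> y \<in> N) \<and> (y = v \<longrightarrow> x \<in> N)"
      unfolding mem_complete_except N_def using xy by (cases "x = v"; cases "y = v") (simp_all add: insert_commute)
    ultimately show ?thesis by blast
  qed
  with f show ?thesis unfolding graph_iso_def by blast
qed

lemma ABC_le_bound_if_degree_eq:
  assumes sg: "simple_graph V E" and n: "card V = n" and k: "2 \<le> k"
    and deg: "\<forall>x\<in>V. k \<le> degree V E x" and v: "v \<in> V" "degree V E v = k"
  shows "ABC V E \<le> ABC_bound n k
    \<and> (ABC V E = ABC_bound n k \<longrightarrow> graph_iso V E {0..<n} (join_graph_edges n k))"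
proof -
  let ?H = "complete_except V E v"
  have finV: "finite V" using sg by (rule simple_graph_finite_vertices)
  have sgH: "simple_graph V ?H" using finV by (rule simple_graph_complete_except)
  have iso: "graph_iso V ?H {0..<n} (join_graph_edges n k)"
    using complete_except_iso_join[OF sg n v] .
  have "0 < n" using n v finV card_gt_0_iff by blast
  then have "k < n" using degree_le_card[OF sg v(1)] v n by linarith
  then have H: "ABC V ?H = ABC_bound n k"
    using ABC_graph_iso[OF sgH simple_graph_join iso] ABC_join[OF k] by simp
  have "E \<noteq> ?H \<Longrightarrow> ABC V E < ABC V ?H"
    using subset_complete_except[OF sg] deg k by (intro ABC_less_supergraph[OF sgH]) auto
  with H iso show ?thesis by fastforce
qed

theorem theorem3p1:
  fixes V :: "'a set" and E :: "'a set set" and n k :: nat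
  assumes "simple_graph V E"
    and "connected_graph V E"
    and "card V = n" and "n \<ge> 6"
    and "edge_connectivity V E = k" and "k \<ge> 2"
  shows "ABC V E \<le> k * sqrt ((real n + k - 3) / (k * (real n - 1)))
            + (k * (real k - 1)) / (2 * (real n - 1)) * sqrt (2 * real n - 4)
            + ((real n - k - 1) * (real n - k - 2)) / (2 * (real n - 2)) * sqrt (2 * real n - 6)
            + k * (real n - k - 1) * sqrt ((2 * real n - 5) / ((real n - 1) * (real n - 2)))
         \<and> (ABC V E = k * sqrt ((real n + k - 3) / (k * (real n - 1)))
            + (k * (real k - 1)) / (2 * (real n - 1)) * sqrt (2 * real n - 4)
            + ((real n - k - 1) * (real n - k - 2)) / (2 * (real n - 2)) * sqrt (2 * real n - 6)
            + k * (real n - k - 1) * sqrt ((2 * real n - 5) / ((real n - 1) * (real n - 2)))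
         \<longleftrightarrow> graph_iso V E {0..<n} (join_graph_edges n k))"
proof -
  note sg = assms(1) and n = assms(3,4) and k = assms(5,6)
  have deg: "\<forall>x\<in>V. k \<le> degree V E x"
    using edge_connectivity_le_degree[OF sg] n k by auto
  have "V \<noteq> {}" using n by auto
  then obtain x where x: "x \<in> V" by blast
  have kn: "k < n" using deg degree_le_card[OF sg x] x n by fastforce
  have le: "ABC V E \<le> ABC_bound n k
      \<and> (ABC V E = ABC_bound n k \<longrightarrow> graph_iso V E {0..<n} (join_graph_edges n k))"
  proof (cases "\<exists>v\<in>V. degree V E v = k")
    case True
    then show ?thesis using ABC_le_bound_if_degree_eq[OF sg n(1) k(2) deg] by blast
  next
    case False
    then have "\<forall>x\<in>V. k + 1 \<le> degree V E x" using deg by (metis Suc_eq_plus1 Suc_leI le_neq_implies_less)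
    then show ?thesis using ABC_less_bound_if_degree_gt[OF sg n k] by simp
  qed
  have "graph_iso V E {0..<n} (join_graph_edges n k) \<Longrightarrow> ABC V E = ABC_bound n k"
    using ABC_graph_iso[OF sg simple_graph_join] ABC_join[OF k(2) kn] by simp
  with le show ?thesis unfolding ABC_bound_def by blast
qed

end
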